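(* Let $X$ be a proper geodesic metric space with basepoint $x_0$, and let $\gamma_1,\gamma_2$ be geodesic rays representing different elements of the Morse boundary of $X$. Then $\rho[\gamma_1]\neq\rho[\gamma_2]$, where $\rho[\gamma]=\lim_{t\to\infty}\rho_{\gamma(t)}$ and $\rho_y(z)=d(z,y)-d(x_0,y)$.
   Context: The horofunction map sends $y\in X$ to the function $\rho_y\in C(X)$, $\rho_y(z)=d(z,y)-d(x_0,y)$, where $C(X)$ is the space of continuous real-valued functions on $X$ with the topology of uniform convergence on compact sets; the horofunction compactification $\overline X^h$ is the closure of $\{\rho_y\}$ in $C(X)$. The Morse boundary is the set of Morse geodesic rays up to bounded Hausdorff distance, where a quasi-geodesic $\gamma$ is Morse if there is a non-decreasing continuous $M:\mathbb{R}_{\ge1}\to\mathbb{R}_{\ge0}$ such that every $Q$--quasi-geodesic with endpoints on $\gamma$ stays in the closed $M(Q)$--neighbourhood of the corresponding subsegment. *)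

theory Defs
  imports "HOL-Analysis.Analysis"
begin

text \<open>The metric space X is the whole type 'a.\<close>

definition proper_space :: "'a::metric_space itself \<Rightarrow> bool" where
  "proper_space _ \<longleftrightarrow> (\<forall>(x::'a) r. compact (cball x r))"

definition geodesic_space :: "'a::metric_space itself \<Rightarrow> bool" where
  "geodesic_space _ \<longleftrightarrow> (\<forall>(x::'a) y. \<exists>g::real \<Rightarrow> 'a.
      g 0 = x \<and> g (dist x y) = y \<and>
      (\<forall>s\<in>{0..dist x y}. \<forall>t\<in>{0..dist x y}. dist (g s) (g t) = \<bar>s - t\<bar>))"

definition geodesic_ray :: "(real \<Rightarrow> 'a::metric_space) \<Rightarrow> bool" where
  "geodesic_ray \<gamma> \<longleftrightarrow> (\<forall>s\<ge>0. \<forall>t\<ge>0. dist (\<gamma> s) (\<gamma> t) = \<bar>s - t\<bar>)"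

definition quasi_geodesic_seg :: "real \<Rightarrow> (real \<Rightarrow> 'a::metric_space) \<Rightarrow> real \<Rightarrow> real \<Rightarrow> bool" where
  "quasi_geodesic_seg Q c a b \<longleftrightarrow> a \<le> b \<and>
     (\<forall>s\<in>{a..b}. \<forall>t\<in>{a..b}.
        \<bar>s - t\<bar> / Q - Q \<le> dist (c s) (c t) \<and> dist (c s) (c t) \<le> Q * \<bar>s - t\<bar> + Q)"

definition morse_ray :: "(real \<Rightarrow> 'a::metric_space) \<Rightarrow> bool" where
  "morse_ray \<gamma> \<longleftrightarrow> geodesic_ray \<gamma> \<and>
     (\<exists>M::real \<Rightarrow> real. mono_on {1..} M \<and> continuous_on {1..} M \<and> (\<forall>Q\<ge>1. M Q \<ge> 0) \<and>
       (\<forall>Q\<ge>1. \<forall>c a b s t. quasi_geodesic_seg Q c a b \<and> s \<ge> 0 \<and> t \<ge> 0 \<and>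
          c a = \<gamma> s \<and> c b = \<gamma> t \<longrightarrow>
          (\<forall>u\<in>{a..b}. \<exists>r\<in>{min s t..max s t}. dist (c u) (\<gamma> r) \<le> M Q)))"

definition bounded_hausdorff_rays :: "(real \<Rightarrow> 'a::metric_space) \<Rightarrow> (real \<Rightarrow> 'a) \<Rightarrow> bool" where
  "bounded_hausdorff_rays \<gamma>1 \<gamma>2 \<longleftrightarrow> (\<exists>C. (\<forall>s\<ge>0. \<exists>t\<ge>0. dist (\<gamma>1 s) (\<gamma>2 t) \<le> C) \<and>
                                   (\<forall>t\<ge>0. \<exists>s\<ge>0. dist (\<gamma>2 t) (\<gamma>1 s) \<le> C))"

definition horofun :: "'a::metric_space \<Rightarrow> 'a \<Rightarrow> 'a \<Rightarrow> real" where
  "horofun x0 y z = dist z y - dist x0 y"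

text \<open>Convergence of \<rho>_{\<gamma>(t)} to f in C(X) (uniform convergence on compact sets) as t \<rightarrow> \<infinity>.\<close>
definition horo_limit :: "'a::metric_space \<Rightarrow> (real \<Rightarrow> 'a) \<Rightarrow> ('a \<Rightarrow> real) \<Rightarrow> bool" where
  "horo_limit x0 \<gamma> f \<longleftrightarrow> continuous_on UNIV f \<and>
     (\<forall>K. compact K \<longrightarrow> (\<forall>e>0. eventually (\<lambda>t. \<forall>z\<in>K. \<bar>horofun x0 (\<gamma> t) z - f z\<bar> < e) at_top))"

end

theory Submission
  imports Defs
begin

(* Along a geodesic ray g the horofunctions rho_{g(t)} converge to the normalised Busemann
   function, because d(z, g t) - t is non-increasing in t and all these functions are
   1-Lipschitz; a horofunction limit f of g therefore drops with unit speed along g.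
   If g1 and g2 have the same limit f, then for every t and all large T the broken path
   g1(0) -> g2(t) -> g1(T) is longer than d(g1(0), g1(T)) by at most 2 d(g1(0), g2(0)) + 1.
   It is therefore a quasi-geodesic with constants independent of t, so the Morse property
   of g1 keeps g2(t) uniformly close to g1. By symmetry the two rays are at bounded
   Hausdorff distance. *)

lemma geodesic_rayD:
  assumes "geodesic_ray \<gamma>" "0 \<le> s" "0 \<le> t"
  shows "dist (\<gamma> s) (\<gamma> t) = \<bar>s - t\<bar>"
  using assms unfolding geodesic_ray_def by blast

lemma morse_ray_imp_geodesic_ray: "morse_ray \<gamma> \<Longrightarrow> geodesic_ray \<gamma>"
  by (simp add: morse_ray_def)

lemma geodesic_space_segmentE:
  fixes x y :: "'a::metric_space"
  assumes "geodesic_space TYPE('a)"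
  obtains g :: "real \<Rightarrow> 'a"
  where "g 0 = x" "g (dist x y) = y" "1-lipschitz_on {0..dist x y} g"
  using assms unfolding geodesic_space_def lipschitz_on_def dist_real_def by fastforce

lemma lipschitz_on_path_join:
  fixes g1 g2 :: "real \<Rightarrow> 'a::metric_space"
  assumes g1: "L-lipschitz_on {0..a} g1" and g2: "L-lipschitz_on {0..b} g2"
    and joint: "g1 a = g2 0"
  shows "L-lipschitz_on {0..a+b} (\<lambda>u. if u \<le> a then g1 u else g2 (u - a))"
    (is "L-lipschitz_on _ ?c")
proof -
  have L: "0 \<le> L" using lipschitz_on_nonneg[OF g1] .
  have ordered: "dist (?c u) (?c v) \<le> L * dist u v"
    if "u \<in> {0..a+b}" "v \<in> {0..a+b}" "u \<le> v" for u v
  proof (cases "v \<le> a")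
    case True
    then show ?thesis using that lipschitz_onD[OF g1, of u v] by auto
  next
    case v: False
    show ?thesis
    proof (cases "u \<le> a")
      case u: True
      have "dist (g1 u) (g2 (v - a)) \<le> dist (g1 u) (g1 a) + dist (g2 0) (g2 (v - a))"
        using dist_triangle[of "g1 u" "g2 (v - a)" "g1 a"] joint by simp
      also have "\<dots> \<le> L * (a - u) + L * (v - a)"
        using lipschitz_onD[OF g1, of u a] lipschitz_onD[OF g2, of 0 "v - a"] that u v
        by (intro add_mono) (auto simp: dist_real_def)
      also have "\<dots> = L * dist u v"
        using that by (simp add: dist_real_def algebra_simps)
      finally show ?thesis using u v by simp
    next
      case False
      then show ?thesis
        using that v lipschitz_onD[OF g2, of "u - a" "v - a"] by (auto simp: dist_real_def)
    qed
  qed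
  show ?thesis
  proof (rule lipschitz_onI[OF _ L])
    fix u v assume "u \<in> {0..a+b}" "v \<in> {0..a+b}"
    then show "dist (?c u) (?c v) \<le> L * dist u v"
      using ordered[of u v] ordered[of v u] by (cases "u \<le> v") (auto simp: dist_commute)
  qed
qed

text \<open>A subpath shortened by more than E would shorten the whole path by more than E.\<close>

lemma lipschitz_path_quasi_geodesic:
  fixes c :: "real \<Rightarrow> 'a::metric_space"
  assumes lip: "1-lipschitz_on {a..b} c" and "a \<le> b"
    and defect: "b - a - E \<le> dist (c a) (c b)" and "1 \<le> Q" "E \<le> Q"
  shows "quasi_geodesic_seg Q c a b"
proof -
  have upper: "dist (c s) (c t) \<le> \<bar>s - t\<bar>" if "s \<in> {a..b}" "t \<in> {a..b}" for s t
    using lipschitz_onD[OF lip that] by (simp add: dist_real_def)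
  have lower: "t - s - E \<le> dist (c s) (c t)" if "s \<in> {a..b}" "t \<in> {a..b}" "s \<le> t" for s t
  proof -
    have "dist (c a) (c b) \<le> dist (c a) (c s) + dist (c s) (c t) + dist (c t) (c b)"
      by (meson add_right_mono dist_triangle order_trans)
    then show ?thesis
      using defect upper[of a s] upper[of t b] that \<open>a \<le> b\<close> by auto
  qed
  show ?thesis
    unfolding quasi_geodesic_seg_def
  proof (intro conjI ballI)
    show "a \<le> b" by fact
  next
    fix s t assume st: "s \<in> {a..b}" "t \<in> {a..b}"
    have "\<bar>s - t\<bar> - E \<le> dist (c s) (c t)"
      using lower[OF st] lower[OF st(2,1)] by (cases "s \<le> t") (auto simp: dist_commute)
    moreover have "\<bar>s - t\<bar> / Q \<le> \<bar>s - t\<bar>"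
      using \<open>1 \<le> Q\<close> by (simp add: divide_le_eq mult_le_cancel_left1)
    ultimately show "\<bar>s - t\<bar> / Q - Q \<le> dist (c s) (c t)" using \<open>E \<le> Q\<close> by linarith
    have "\<bar>s - t\<bar> \<le> Q * \<bar>s - t\<bar>" using \<open>1 \<le> Q\<close> by (simp add: mult_le_cancel_right1)
    then show "dist (c s) (c t) \<le> Q * \<bar>s - t\<bar> + Q" using upper[OF st] \<open>1 \<le> Q\<close> by linarith
  qed
qed

text \<open>The broken geodesic \<gamma> 0 \<rightarrow> m \<rightarrow> \<gamma> T is a (max 1 E)-quasi-geodesic.\<close>

lemma morse_ray_detour_bound:
  fixes \<gamma> :: "real \<Rightarrow> 'a::metric_space"
  assumes geo: "geodesic_space TYPE('a)" and "morse_ray \<gamma>"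
  shows "\<exists>C. \<forall>T m. 0 \<le> T \<and> dist (\<gamma> 0) m + dist m (\<gamma> T) \<le> T + E \<longrightarrow>
           (\<exists>r\<in>{0..T}. dist m (\<gamma> r) \<le> C)"
proof -
  obtain M :: "real \<Rightarrow> real" where morse:
    "\<And>Q c a b s t u. \<lbrakk>1 \<le> Q; quasi_geodesic_seg Q c a b; 0 \<le> s; 0 \<le> t;
       c a = \<gamma> s; c b = \<gamma> t; u \<in> {a..b}\<rbrakk> \<Longrightarrow> \<exists>r\<in>{min s t..max s t}. dist (c u) (\<gamma> r) \<le> M Q"
    using \<open>morse_ray \<gamma>\<close> unfolding morse_ray_def by metis
  define Q where "Q = max 1 E"
  have "\<exists>r\<in>{0..T}. dist m (\<gamma> r) \<le> M Q"
    if T: "0 \<le> T" and detour: "dist (\<gamma> 0) m + dist m (\<gamma> T) \<le> T + E" for T m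
  proof -
    define a where "a = dist (\<gamma> 0) m"
    define b where "b = dist m (\<gamma> T)"
    obtain g1 where g1: "g1 0 = \<gamma> 0" "g1 a = m" "1-lipschitz_on {0..a} g1"
      using geodesic_space_segmentE[OF geo] unfolding a_def by metis
    obtain g2 where g2: "g2 0 = m" "g2 b = \<gamma> T" "1-lipschitz_on {0..b} g2"
      using geodesic_space_segmentE[OF geo] unfolding b_def by metis
    define c where "c = (\<lambda>u. if u \<le> a then g1 u else g2 (u - a))"
    have ab: "0 \<le> a" "0 \<le> b" by (simp_all add: a_def b_def)
    have c0: "c 0 = \<gamma> 0" and ca: "c a = m" using g1 ab by (simp_all add: c_def)
    have cT: "c (a + b) = \<gamma> T"
      using g1 g2 ab by (cases "b = 0") (auto simp: c_def b_def)
    have "1-lipschitz_on {0..a+b} c"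
      unfolding c_def using g1 g2 by (intro lipschitz_on_path_join) simp_all
    moreover have "dist (\<gamma> 0) (\<gamma> T) = T"
      using geodesic_rayD[OF morse_ray_imp_geodesic_ray[OF \<open>morse_ray \<gamma>\<close>], of 0 T] T by simp
    ultimately have "quasi_geodesic_seg Q c 0 (a + b)"
      using detour ab c0 cT
      by (intro lipschitz_path_quasi_geodesic[where E = E]) (auto simp: Q_def a_def b_def)
    then obtain r where "r \<in> {min 0 T..max 0 T}" "dist (c a) (\<gamma> r) \<le> M Q"
      using morse[of Q c 0 "a + b" 0 T a] c0 cT T ab by (auto simp: Q_def)
    then show ?thesis using ca T by auto
  qed
  then show ?thesis by blast
qed

lemma equi_lipschitz_tendsto_uniformly_on_compact:
  fixes F :: "'i \<Rightarrow> 'a::metric_space \<Rightarrow> real"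
  assumes K: "compact K" and e: "0 < e"
    and lip: "\<And>i. L-lipschitz_on K (F i)" and lip_g: "L-lipschitz_on K g"
    and lim: "\<And>z. z \<in> K \<Longrightarrow> ((\<lambda>i. F i z) \<longlongrightarrow> g z) net"
  shows "eventually (\<lambda>i. \<forall>z\<in>K. \<bar>F i z - g z\<bar> < e) net"
proof -
  define r where "r = e / (3 * (L + 1))"
  have L: "0 \<le> L" using lipschitz_on_nonneg[OF lip_g] .
  then have "0 < r" and Lr: "L * r < e / 3" using e by (simp_all add: r_def field_simps)
  obtain W where W: "W \<subseteq> K" "finite W" "K \<subseteq> (\<Union>w\<in>W. ball w r)"
    using compactE_image[OF K, of K "\<lambda>w. ball w r"] \<open>0 < r\<close> by force
  have "eventually (\<lambda>i. dist (F i w) (g w) < e / 3) net" if "w \<in> W" for w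
    by (intro tendstoD lim) (use W that e in auto)
  then have "eventually (\<lambda>i. \<forall>w\<in>W. \<bar>F i w - g w\<bar> < e / 3) net"
    using \<open>finite W\<close> by (auto intro: eventually_ball_finite simp: dist_real_def)
  then show ?thesis
  proof (rule eventually_mono, intro ballI)
    fix i z assume net: "\<forall>w\<in>W. \<bar>F i w - g w\<bar> < e / 3" and "z \<in> K"
    then obtain w where w: "w \<in> W" "dist z w < r" using W by (auto simp: dist_commute)
    have "w \<in> K" using w W by auto
    have "\<bar>F i z - F i w\<bar> \<le> L * dist z w" "\<bar>g w - g z\<bar> \<le> L * dist z w"
      using lipschitz_onD[OF lip \<open>z \<in> K\<close> \<open>w \<in> K\<close>, of i]
        lipschitz_onD[OF lip_g \<open>w \<in> K\<close> \<open>z \<in> K\<close>]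
      by (simp_all add: dist_real_def dist_commute)
    moreover have "L * dist z w \<le> L * r" using w L by (simp add: mult_left_mono)
    moreover have "\<bar>F i w - g w\<bar> < e / 3" using net w by blast
    ultimately show "\<bar>F i z - g z\<bar> < e" using Lr by linarith
  qed
qed

lemma horofun_lipschitz: "1-lipschitz_on UNIV (horofun x0 y)"
proof (rule lipschitz_onI)
  fix z w :: 'a
  show "dist (horofun x0 y z) (horofun x0 y w) \<le> 1 * dist z w"
    using dist_triangle[of z y w] dist_triangle3[of w y z]
    by (simp add: horofun_def dist_real_def abs_le_iff)
qed simp

definition busemann :: "(real \<Rightarrow> 'a::metric_space) \<Rightarrow> 'a \<Rightarrow> real" where
  "busemann \<gamma> z = (INF t\<in>{0..}. dist z (\<gamma> t) - t)"

lemma busemann_tendsto: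
  assumes ray: "geodesic_ray \<gamma>"
  shows "((\<lambda>t. dist z (\<gamma> t) - t) \<longlongrightarrow> busemann \<gamma> z) at_top"
proof -
  let ?h = "\<lambda>t. dist z (\<gamma> t) - t"
  have antimono: "?h t \<le> ?h s" if "0 \<le> s" "s \<le> t" for s t
    using dist_triangle[of z "\<gamma> t" "\<gamma> s"] geodesic_rayD[OF ray, of s t] that by simp
  have "- dist z (\<gamma> 0) \<le> ?h t" if "0 \<le> t" for t
    using dist_triangle[of "\<gamma> 0" "\<gamma> t" z] geodesic_rayD[OF ray, of 0 t] that
    by (simp add: dist_commute)
  then have bdd: "bdd_below (?h ` {0..})" by (intro bdd_belowI2) auto
  show ?thesis
  proof (rule decreasing_tendsto)
    show "eventually (\<lambda>t. busemann \<gamma> z \<le> ?h t) at_top"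
      using eventually_ge_at_top[of 0]
      by eventually_elim (auto simp: busemann_def intro: cINF_lower[OF bdd])
  next
    fix x assume "busemann \<gamma> z < x"
    then obtain t0 where "0 \<le> t0" "?h t0 < x"
      using cINF_less_iff[OF _ bdd] by (auto simp: busemann_def)
    then show "eventually (\<lambda>t. ?h t < x) at_top"
      using antimono unfolding eventually_at_top_linorder by (meson le_less_trans)
  qed
qed

lemma busemann_lipschitz:
  assumes "geodesic_ray \<gamma>"
  shows "1-lipschitz_on UNIV (busemann \<gamma>)"
proof (rule lipschitz_onI)
  fix z w :: 'a
  have "((\<lambda>t. \<bar>(dist z (\<gamma> t) - t) - (dist w (\<gamma> t) - t)\<bar>) \<longlongrightarrow>
      \<bar>busemann \<gamma> z - busemann \<gamma> w\<bar>) at_top"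
    using assms by (intro tendsto_intros busemann_tendsto)
  moreover have "\<bar>(dist z (\<gamma> t) - t) - (dist w (\<gamma> t) - t)\<bar> \<le> dist z w" for t
    using lipschitz_onD[OF horofun_lipschitz[of "\<gamma> t" "\<gamma> t"], of z w]
    by (simp add: horofun_def dist_real_def)
  ultimately show "dist (busemann \<gamma> z) (busemann \<gamma> w) \<le> 1 * dist z w"
    by (simp add: dist_real_def tendsto_upperbound)
qed simp

lemma horo_limit_busemann:
  assumes ray: "geodesic_ray \<gamma>"
  shows "horo_limit x0 \<gamma> (\<lambda>z. busemann \<gamma> z - busemann \<gamma> x0)"
proof -
  have lip: "1-lipschitz_on UNIV (\<lambda>z. busemann \<gamma> z - busemann \<gamma> x0)"
    using lipschitz_on_diff[OF busemann_lipschitz[OF ray] lipschitz_on_constant] by simp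
  have pointwise: "((\<lambda>t. horofun x0 (\<gamma> t) z) \<longlongrightarrow> busemann \<gamma> z - busemann \<gamma> x0) at_top" for z
    unfolding horofun_def
    using tendsto_diff[OF busemann_tendsto[OF ray, of z] busemann_tendsto[OF ray, of x0]]
    by simp
  show ?thesis
    unfolding horo_limit_def
  proof (intro conjI allI impI)
    fix K :: "'a set" and e :: real assume "compact K" "0 < e"
    then show "eventually (\<lambda>t. \<forall>z\<in>K. \<bar>horofun x0 (\<gamma> t) z - (busemann \<gamma> z - busemann \<gamma> x0)\<bar> < e) at_top"
      using lipschitz_on_subset[OF lip] lipschitz_on_subset[OF horofun_lipschitz] pointwise
      by (intro equi_lipschitz_tendsto_uniformly_on_compact) auto
  qed (rule lipschitz_on_continuous_on[OF lip])
qed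

lemma horo_limit_tendsto_dist_diff:
  assumes "horo_limit x0 \<gamma> f"
  shows "((\<lambda>t. dist y (\<gamma> t) - dist z (\<gamma> t)) \<longlongrightarrow> f y - f z) at_top"
proof -
  have "((\<lambda>t. horofun x0 (\<gamma> t) w) \<longlongrightarrow> f w) at_top" for w
  proof (rule tendstoI)
    fix e :: real assume "0 < e"
    then have "eventually (\<lambda>t. \<forall>z\<in>{w}. \<bar>horofun x0 (\<gamma> t) z - f z\<bar> < e) at_top"
      using assms compact_sing unfolding horo_limit_def by blast
    then show "eventually (\<lambda>t. dist (horofun x0 (\<gamma> t) w) (f w) < e) at_top"
      by (simp add: dist_real_def)
  qed
  from tendsto_diff[OF this this] show ?thesis by (simp add: horofun_def)
qed

lemma horo_limit_along_ray:
  assumes ray: "geodesic_ray \<gamma>" and "horo_limit x0 \<gamma> f" "0 \<le> s" "0 \<le> t"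
  shows "f (\<gamma> t) - f (\<gamma> s) = s - t"
proof -
  have "eventually (\<lambda>T. dist (\<gamma> t) (\<gamma> T) - dist (\<gamma> s) (\<gamma> T) = s - t) at_top"
    using eventually_ge_at_top[of "max s t"]
    by eventually_elim (use assms geodesic_rayD[OF ray] in auto)
  then have "((\<lambda>T. dist (\<gamma> t) (\<gamma> T) - dist (\<gamma> s) (\<gamma> T)) \<longlongrightarrow> s - t) at_top"
    by (rule tendsto_eventually)
  with horo_limit_tendsto_dist_diff[OF assms(2)] show ?thesis
    by (rule tendsto_unique[OF trivial_limit_at_top_linorder])
qed

lemma same_horo_limit_imp_close_to_morse_ray:
  fixes \<gamma>1 \<gamma>2 :: "real \<Rightarrow> 'a::metric_space"
  assumes geo: "geodesic_space TYPE('a)" and morse: "morse_ray \<gamma>1" and ray2: "geodesic_ray \<gamma>2"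
    and lim1: "horo_limit x0 \<gamma>1 f" and lim2: "horo_limit x0 \<gamma>2 f"
  shows "\<exists>C. \<forall>t\<ge>0. \<exists>r\<ge>0. dist (\<gamma>2 t) (\<gamma>1 r) \<le> C"
proof -
  define D where "D = dist (\<gamma>1 0) (\<gamma>2 0)"
  obtain C where C: "\<And>T m. \<lbrakk>0 \<le> T; dist (\<gamma>1 0) m + dist m (\<gamma>1 T) \<le> T + (2 * D + 1)\<rbrakk>
      \<Longrightarrow> \<exists>r\<in>{0..T}. dist m (\<gamma>1 r) \<le> C"
    using morse_ray_detour_bound[OF geo morse] by blast
  have "\<exists>r\<ge>0. dist (\<gamma>2 t) (\<gamma>1 r) \<le> C" if "0 \<le> t" for t
  proof -
    have "f (\<gamma>2 t) - f (\<gamma>2 0) < 1 - t"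
      using horo_limit_along_ray[OF ray2 lim2, of 0 t] that by simp
    from order_tendstoD(2)[OF horo_limit_tendsto_dist_diff[OF lim1] this]
    have "eventually (\<lambda>T. dist (\<gamma>2 t) (\<gamma>1 T) - dist (\<gamma>2 0) (\<gamma>1 T) < 1 - t) at_top" .
    then have "eventually (\<lambda>T. 0 \<le> T \<and> dist (\<gamma>2 t) (\<gamma>1 T) - dist (\<gamma>2 0) (\<gamma>1 T) < 1 - t) at_top"
      by (intro eventually_conj eventually_ge_at_top)
    then obtain T where "0 \<le> T" and T: "dist (\<gamma>2 t) (\<gamma>1 T) < dist (\<gamma>2 0) (\<gamma>1 T) + 1 - t"
      using eventually_happens'[OF trivial_limit_at_top_linorder] by fastforce
    have "dist (\<gamma>1 0) (\<gamma>2 t) \<le> D + t"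
      using dist_triangle[of "\<gamma>1 0" "\<gamma>2 t" "\<gamma>2 0"] geodesic_rayD[OF ray2, of 0 t] that
      by (simp add: D_def)
    moreover have "dist (\<gamma>2 0) (\<gamma>1 T) \<le> D + T"
      using dist_triangle[of "\<gamma>2 0" "\<gamma>1 T" "\<gamma>1 0"] \<open>0 \<le> T\<close>
        geodesic_rayD[OF morse_ray_imp_geodesic_ray[OF morse], of 0 T]
      by (simp add: D_def dist_commute)
    ultimately obtain r where "r \<in> {0..T}" "dist (\<gamma>2 t) (\<gamma>1 r) \<le> C"
      using C[OF \<open>0 \<le> T\<close>, of "\<gamma>2 t"] T by fastforce
    then show ?thesis by auto
  qed
  then show ?thesis by blast
qed

theorem lemma5p5:
  fixes x0 :: "'a::metric_space" and \<gamma>1 \<gamma>2 :: "real \<Rightarrow> 'a"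
  assumes "proper_space TYPE('a)" and "geodesic_space TYPE('a)"
    and "morse_ray \<gamma>1" and "morse_ray \<gamma>2"
    and "\<not> bounded_hausdorff_rays \<gamma>1 \<gamma>2"
  shows "(\<exists>f1. horo_limit x0 \<gamma>1 f1) \<and> (\<exists>f2. horo_limit x0 \<gamma>2 f2) \<and>
         (\<forall>f1 f2. horo_limit x0 \<gamma>1 f1 \<and> horo_limit x0 \<gamma>2 f2 \<longrightarrow> f1 \<noteq> f2)"
proof (intro conjI allI impI notI)
  have rays: "geodesic_ray \<gamma>1" "geodesic_ray \<gamma>2"
    using assms(3,4) by (simp_all add: morse_ray_imp_geodesic_ray)
  then show "\<exists>f1. horo_limit x0 \<gamma>1 f1" "\<exists>f2. horo_limit x0 \<gamma>2 f2"
    by (blast intro: horo_limit_busemann)+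
  fix f1 f2 assume "horo_limit x0 \<gamma>1 f1 \<and> horo_limit x0 \<gamma>2 f2" "f1 = f2"
  then obtain C1 C2 where
      "\<forall>t\<ge>0. \<exists>s\<ge>0. dist (\<gamma>2 t) (\<gamma>1 s) \<le> C1" "\<forall>s\<ge>0. \<exists>t\<ge>0. dist (\<gamma>1 s) (\<gamma>2 t) \<le> C2"
    using same_horo_limit_imp_close_to_morse_ray[OF assms(2) assms(3) rays(2)]
      same_horo_limit_imp_close_to_morse_ray[OF assms(2) assms(4) rays(1)] by metis
  then have "bounded_hausdorff_rays \<gamma>1 \<gamma>2"
    unfolding bounded_hausdorff_rays_def
    by (intro exI[of _ "max C1 C2"]) (meson max.coboundedI1 max.coboundedI2 order_trans)
  with assms(5) show False ..
qed

end
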